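(* Let $\mathcal{T}:L_2(X)\to L_2(Z)$, $\mathcal{T}h(Z)=\mathbb{E}[h(X)\mid Z]$, and let $\varphi:\mathcal{X}\to\mathbb{R}^d$, $\psi:\mathcal{Z}\to\mathbb{R}^d$ have components $\varphi_i\in L_2(X)$, $\psi_i\in L_2(Z)$. Let $\mathcal{T}_d(\varphi,\psi)=\sum_{i=1}^d\psi_i\otimes\varphi_i$. Then \[ \|\mathcal{T}_d(\varphi,\psi)\|_{\mathrm{HS}}^2-2\langle\mathcal{T}_d(\varphi,\psi),\mathcal{T}\rangle_{\mathrm{HS}}=\mathbb{E}_X\mathbb{E}_Z\big[(\varphi(X)^\top\psi(Z))^2\big]-2\,\mathbb{E}_{X,Z}\big[\varphi(X)^\top\psi(Z)\big]. \]
   Context: $L_2(X)=L_2(\mathcal{X},\pi_X)$, $L_2(Z)=L_2(\mathcal{Z},\pi_Z)$ where $\pi_X,\pi_Z$ are the laws of $X,Z$. For $g\in L_2(Z)$, $f\in L_2(X)$, $(g\otimes f)(h)=\langle h,f\rangle_{L_2(X)}g$. $\|\cdot\|_{\mathrm{HS}}$ and $\langle\cdot,\cdot\rangle_{\mathrm{HS}}$ are the Hilbert–Schmidt norm and inner product (the latter is well defined since $\mathcal{T}_d(\varphi,\psi)$ has finite rank). $\mathbb{E}_X\mathbb{E}_Z$ denotes expectation with $X$ and $Z$ drawn independently from their marginals, and $\mathbb{E}_{X,Z}$ expectation under the joint law. *)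

theory Defs
  imports "HOL-Probability.Probability"
begin

definition L2mem :: "'a measure \<Rightarrow> ('a \<Rightarrow> real) \<Rightarrow> bool" where
  "L2mem \<mu> f \<longleftrightarrow> f \<in> borel_measurable \<mu> \<and> integrable \<mu> (\<lambda>x. (f x)\<^sup>2)"

definition inner_L2 :: "'a measure \<Rightarrow> ('a \<Rightarrow> real) \<Rightarrow> ('a \<Rightarrow> real) \<Rightarrow> real" where
  "inner_L2 \<mu> f g = (\<integral>x. f x * g x \<partial>\<mu>)"

definition ONB_L2 :: "'a measure \<Rightarrow> ('i \<Rightarrow> 'a \<Rightarrow> real) \<Rightarrow> bool" where
  "ONB_L2 \<mu> e \<longleftrightarrow>
     (\<forall>k. L2mem \<mu> (e k)) \<and>
     (\<forall>k l. inner_L2 \<mu> (e k) (e l) = (if k = l then 1 else 0)) \<and>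
     (\<forall>f. L2mem \<mu> f \<and> (\<forall>k. inner_L2 \<mu> f (e k) = 0) \<longrightarrow> (AE x in \<mu>. f x = 0))"

text \<open>The conditional expectation operator T h = E[h(X) | Z], as an element of
  L2(Omega, sigma(Z), M) (identified with L2(Z)).\<close>
definition condT :: "'w measure \<Rightarrow> ('w \<Rightarrow> 'x) \<Rightarrow> ('w \<Rightarrow> 'z) \<Rightarrow> 'z measure
    \<Rightarrow> ('x \<Rightarrow> real) \<Rightarrow> ('w \<Rightarrow> real)" where
  "condT M X Z MZ h = real_cond_exp M (vimage_algebra (space M) Z MZ) (\<lambda>\<omega>. h (X \<omega>))"

text \<open>T_d(phi,psi) = sum_i psi_i \<otimes> phi_i, i.e. h \<mapsto> sum_i <h,phi_i>_{L2(X)} psi_i,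
  with psi_i viewed as the sigma(Z)-measurable function psi_i(Z).\<close>
definition Td :: "'w measure \<Rightarrow> ('w \<Rightarrow> 'x) \<Rightarrow> ('w \<Rightarrow> 'z) \<Rightarrow> 'x measure
    \<Rightarrow> ('x \<Rightarrow> real^'d) \<Rightarrow> ('z \<Rightarrow> real^'d) \<Rightarrow> ('x \<Rightarrow> real) \<Rightarrow> ('w \<Rightarrow> real)" where
  "Td M X Z MX \<phi> \<psi> h =
     (\<lambda>\<omega>. \<Sum>i\<in>UNIV. inner_L2 (distr M MX X) h (\<lambda>x. \<phi> x $ i) * (\<psi> (Z \<omega>) $ i))"

text \<open>Hilbert-Schmidt inner product <A,B>_HS = sum_k <A e_k, B e_k>_{L2(Z)} computed
  in an orthonormal basis e of L2(X).\<close>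
definition hs_inner :: "'w measure \<Rightarrow> ('i \<Rightarrow> 'x \<Rightarrow> real)
    \<Rightarrow> (('x \<Rightarrow> real) \<Rightarrow> ('w \<Rightarrow> real)) \<Rightarrow> (('x \<Rightarrow> real) \<Rightarrow> ('w \<Rightarrow> real)) \<Rightarrow> real" where
  "hs_inner M e A B = (\<Sum>\<^sub>\<infinity>k. inner_L2 M (A (e k)) (B (e k)))"

end

theory Submission
  imports Defs
begin

text \<open>
  Both Hilbert--Schmidt inner products are evaluated in the orthonormal basis \<open>e\<close>.
  With \<open>a\<^sub>k\<^sub>i = \<langle>e\<^sub>k, \<phi>\<^sub>i\<rangle>\<close> we get \<open>\<langle>T\<^sub>d e\<^sub>k, T\<^sub>d e\<^sub>k\<rangle> = \<Sum>\<^sub>i\<^sub>j a\<^sub>k\<^sub>i a\<^sub>k\<^sub>j \<langle>\<psi>\<^sub>i, \<psi>\<^sub>j\<rangle>\<close>, and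
  Parseval's identity in polarised form, \<open>\<Sum>\<^sub>k a\<^sub>k\<^sub>i a\<^sub>k\<^sub>j = \<langle>\<phi>\<^sub>i, \<phi>\<^sub>j\<rangle>\<close>, turns the sum over \<open>k\<close>
  into \<open>\<Sum>\<^sub>i\<^sub>j \<langle>\<phi>\<^sub>i, \<phi>\<^sub>j\<rangle> \<langle>\<psi>\<^sub>i, \<psi>\<^sub>j\<rangle> = E\<^sub>X E\<^sub>Z (\<phi>(X)\<^sup>T \<psi>(Z))\<^sup>2\<close>.
  For the cross term, the defining property of the conditional expectation gives
  \<open>\<langle>\<psi>\<^sub>i(Z), E[e\<^sub>k(X) | Z]\<rangle> = \<langle>\<psi>\<^sub>i(Z), e\<^sub>k(X)\<rangle>\<close>; the functions \<open>e\<^sub>k(X)\<close> are orthonormal (though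
  not complete) in \<open>L\<^sub>2\<close> of the underlying space, and \<open>\<phi>\<^sub>i(X)\<close> satisfies Parseval's identity there,
  which suffices for the polarised identity \<open>\<Sum>\<^sub>k \<langle>e\<^sub>k(X), \<phi>\<^sub>i(X)\<rangle> \<langle>e\<^sub>k(X), \<psi>\<^sub>i(Z)\<rangle> = E[\<phi>\<^sub>i(X) \<psi>\<^sub>i(Z)]\<close>.
  Parseval's identity itself rests on the completeness of \<open>L\<^sub>2\<close> (Riesz--Fischer), obtained from an
  almost everywhere convergent subsequence and Fatou's lemma.
\<close>

section \<open>Square-integrable functions\<close>

abbreviation sqnorm_L2 :: "'a measure \<Rightarrow> ('a \<Rightarrow> real) \<Rightarrow> real" where
  "sqnorm_L2 \<mu> f \<equiv> inner_L2 \<mu> f f"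

lemma L2mem_borel_measurable [measurable_dest]: "L2mem \<mu> f \<Longrightarrow> f \<in> borel_measurable \<mu>"
  by (simp add: L2mem_def)

lemma abs_mult_le_sum_squares: "\<bar>(a::real) * b\<bar> \<le> a\<^sup>2 + b\<^sup>2"
proof -
  have "0 \<le> (\<bar>a\<bar> - \<bar>b\<bar>)\<^sup>2"
    by simp
  then have "2 * (\<bar>a\<bar> * \<bar>b\<bar>) \<le> a\<^sup>2 + b\<^sup>2"
    by (simp add: power2_diff)
  moreover have "0 \<le> \<bar>a\<bar> * \<bar>b\<bar>"
    by simp
  ultimately show ?thesis
    unfolding abs_mult by linarith
qed

lemma integrable_mult_L2:
  assumes "L2mem \<mu> f" "L2mem \<mu> g"
  shows "integrable \<mu> (\<lambda>x. f x * g x)"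
proof (rule Bochner_Integration.integrable_bound)
  show "integrable \<mu> (\<lambda>x. (f x)\<^sup>2 + (g x)\<^sup>2)"
    using assms by (auto simp: L2mem_def)
  show "AE x in \<mu>. norm (f x * g x) \<le> norm ((f x)\<^sup>2 + (g x)\<^sup>2)"
  proof (rule AE_I2)
    fix x
    have "0 \<le> (f x)\<^sup>2 + (g x)\<^sup>2"
      by simp
    then show "norm (f x * g x) \<le> norm ((f x)\<^sup>2 + (g x)\<^sup>2)"
      using abs_mult_le_sum_squares[of "f x" "g x"] by simp
  qed
qed (use assms in measurable)

lemma L2mem_add:
  assumes "L2mem \<mu> f" "L2mem \<mu> g"
  shows "L2mem \<mu> (\<lambda>x. f x + g x)"
proof -
  have [measurable]: "f \<in> borel_measurable \<mu>" "g \<in> borel_measurable \<mu>"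
    using assms by (simp_all add: L2mem_def)
  have "integrable \<mu> (\<lambda>x. (f x)\<^sup>2 + (g x)\<^sup>2 + 2 * (f x * g x))"
    using assms integrable_mult_L2[OF assms] by (auto simp: L2mem_def)
  then show ?thesis
    by (simp add: L2mem_def power2_sum mult.assoc)
qed

lemma L2mem_mult_left:
  assumes "L2mem \<mu> f"
  shows "L2mem \<mu> (\<lambda>x. c * f x)"
  using assms by (auto simp: L2mem_def power_mult_distrib)

lemma L2mem_diff:
  assumes "L2mem \<mu> f" "L2mem \<mu> g"
  shows "L2mem \<mu> (\<lambda>x. f x - g x)"
  using L2mem_add[OF assms(1) L2mem_mult_left[OF assms(2), of "-1"]] by simp

lemma L2mem_sum:
  assumes "finite A" "\<And>k. k \<in> A \<Longrightarrow> L2mem \<mu> (u k)"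
  shows "L2mem \<mu> (\<lambda>x. \<Sum>k\<in>A. c k * u k x)"
  using assms
proof (induction A rule: finite_induct)
  case empty
  then show ?case by (simp add: L2mem_def)
next
  case (insert a A)
  then show ?case by (auto intro!: L2mem_add L2mem_mult_left)
qed

lemma L2mem_distr_measurable: "L2mem (distr M N T) f \<Longrightarrow> f \<in> borel_measurable N"
  by (simp add: L2mem_def)

lemma L2mem_compose:
  assumes T: "T \<in> measurable M N" and f: "L2mem (distr M N T) f"
  shows "L2mem M (\<lambda>x. f (T x))"
proof -
  have [measurable]: "T \<in> measurable M N" "f \<in> borel_measurable N"
    using T L2mem_distr_measurable[OF f] .
  show ?thesis
    using f by (simp add: L2mem_def integrable_distr_eq[OF T])
qed

lemma inner_L2_distr:
  assumes "T \<in> measurable M N" "f \<in> borel_measurable N" "g \<in> borel_measurable N"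
  shows "inner_L2 (distr M N T) f g = inner_L2 M (\<lambda>x. f (T x)) (\<lambda>x. g (T x))"
  unfolding inner_L2_def by (rule integral_distr) (use assms in measurable)

lemma inner_L2_commute: "inner_L2 \<mu> f g = inner_L2 \<mu> g f"
  by (simp add: inner_L2_def mult.commute)

lemma sqnorm_L2_nonneg: "0 \<le> sqnorm_L2 \<mu> f"
  by (simp add: inner_L2_def)

lemma inner_L2_diff_left:
  assumes "L2mem \<mu> f" "L2mem \<mu> h" "L2mem \<mu> g"
  shows "inner_L2 \<mu> (\<lambda>x. f x - h x) g = inner_L2 \<mu> f g - inner_L2 \<mu> h g"
  using integrable_mult_L2[OF assms(1,3)] integrable_mult_L2[OF assms(2,3)]
  by (simp add: inner_L2_def left_diff_distrib)

lemma inner_L2_diff_right: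
  assumes "L2mem \<mu> f" "L2mem \<mu> h" "L2mem \<mu> g"
  shows "inner_L2 \<mu> g (\<lambda>x. f x - h x) = inner_L2 \<mu> g f - inner_L2 \<mu> g h"
  using integrable_mult_L2[OF assms(3,1)] integrable_mult_L2[OF assms(3,2)]
  by (simp add: inner_L2_def right_diff_distrib)

lemma inner_L2_sum_left:
  assumes "finite A" "\<And>k. k \<in> A \<Longrightarrow> L2mem \<mu> (u k)" "L2mem \<mu> g"
  shows "inner_L2 \<mu> (\<lambda>x. \<Sum>k\<in>A. c k * u k x) g = (\<Sum>k\<in>A. c k * inner_L2 \<mu> (u k) g)"
  using assms integrable_mult_L2[of \<mu> _ g]
  by (simp add: inner_L2_def sum_distrib_right mult.assoc)

lemma inner_L2_sum_right:
  assumes "finite A" "\<And>k. k \<in> A \<Longrightarrow> L2mem \<mu> (u k)" "L2mem \<mu> g"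
  shows "inner_L2 \<mu> g (\<lambda>x. \<Sum>k\<in>A. c k * u k x) = (\<Sum>k\<in>A. c k * inner_L2 \<mu> g (u k))"
  using inner_L2_sum_left[OF assms] by (simp add: inner_L2_commute)

lemma inner_L2_sum_sum:
  assumes "finite I" "finite J" "\<And>i. i \<in> I \<Longrightarrow> L2mem \<mu> (u i)" "\<And>j. j \<in> J \<Longrightarrow> L2mem \<mu> (v j)"
  shows "inner_L2 \<mu> (\<lambda>x. \<Sum>i\<in>I. a i * u i x) (\<lambda>x. \<Sum>j\<in>J. b j * v j x)
       = (\<Sum>i\<in>I. \<Sum>j\<in>J. a i * b j * inner_L2 \<mu> (u i) (v j))"
  using assms by (simp add: inner_L2_sum_left inner_L2_sum_right L2mem_sum sum_distrib_left mult.assoc)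

lemma sqnorm_L2_diff:
  assumes "L2mem \<mu> f" "L2mem \<mu> g"
  shows "sqnorm_L2 \<mu> (\<lambda>x. f x - g x) = sqnorm_L2 \<mu> f - 2 * inner_L2 \<mu> f g + sqnorm_L2 \<mu> g"
proof -
  have "sqnorm_L2 \<mu> (\<lambda>x. f x - g x) = inner_L2 \<mu> (\<lambda>x. f x - g x) f - inner_L2 \<mu> (\<lambda>x. f x - g x) g"
    by (rule inner_L2_diff_right[OF assms L2mem_diff[OF assms]])
  also have "\<dots> = (sqnorm_L2 \<mu> f - inner_L2 \<mu> g f) - (inner_L2 \<mu> f g - sqnorm_L2 \<mu> g)"
    by (simp only: inner_L2_diff_left[OF assms] assms)
  finally show ?thesis
    using inner_L2_commute[of \<mu> g f] by linarith
qed

lemma sqnorm_L2_diff_commute: "sqnorm_L2 \<mu> (\<lambda>x. f x - g x) = sqnorm_L2 \<mu> (\<lambda>x. g x - f x)"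
  by (simp add: inner_L2_def algebra_simps)

lemma inner_L2_Cauchy_Schwarz:
  assumes "L2mem \<mu> f" "L2mem \<mu> g"
  shows "(inner_L2 \<mu> f g)\<^sup>2 \<le> sqnorm_L2 \<mu> f * sqnorm_L2 \<mu> g"
proof -
  have [measurable]: "f \<in> borel_measurable \<mu>" "g \<in> borel_measurable \<mu>"
    using assms by (simp_all add: L2mem_def)
  have nn: "(\<integral>\<^sup>+x. ennreal (h x) \<partial>\<mu>) = ennreal (\<integral>x. h x \<partial>\<mu>)"
    if "integrable \<mu> h" "\<And>x. 0 \<le> h x" for h
    using that by (intro nn_integral_eq_integral) auto
  have sq: "(\<integral>\<^sup>+x. ennreal \<bar>h x\<bar> ^ 2 \<partial>\<mu>) = ennreal (sqnorm_L2 \<mu> h)" if "L2mem \<mu> h" for h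
  proof -
    have "(\<integral>\<^sup>+x. ennreal \<bar>h x\<bar> ^ 2 \<partial>\<mu>) = (\<integral>\<^sup>+x. ennreal ((h x)\<^sup>2) \<partial>\<mu>)"
      by (simp add: ennreal_power)
    also have "\<dots> = ennreal (\<integral>x. (h x)\<^sup>2 \<partial>\<mu>)"
      by (rule nn) (use that in \<open>auto simp: L2mem_def\<close>)
    finally show ?thesis
      by (simp add: inner_L2_def power2_eq_square)
  qed
  have prod: "(\<integral>\<^sup>+x. ennreal \<bar>f x\<bar> * ennreal \<bar>g x\<bar> \<partial>\<mu>) = ennreal (\<integral>x. \<bar>f x * g x\<bar> \<partial>\<mu>)"
  proof -
    have "(\<integral>\<^sup>+x. ennreal \<bar>f x\<bar> * ennreal \<bar>g x\<bar> \<partial>\<mu>) = (\<integral>\<^sup>+x. ennreal \<bar>f x * g x\<bar> \<partial>\<mu>)"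
      by (simp add: abs_mult ennreal_mult)
    also have "\<dots> = ennreal (\<integral>x. \<bar>f x * g x\<bar> \<partial>\<mu>)"
      using integrable_mult_L2[OF assms] by (intro nn) auto
    finally show ?thesis .
  qed
  have abs_le: "\<bar>inner_L2 \<mu> f g\<bar> \<le> (\<integral>x. \<bar>f x * g x\<bar> \<partial>\<mu>)"
    unfolding inner_L2_def by (rule integral_abs_bound)
  have "(inner_L2 \<mu> f g)\<^sup>2 \<le> (\<integral>x. \<bar>f x * g x\<bar> \<partial>\<mu>)\<^sup>2"
    using power_mono[OF abs_le abs_ge_zero, of 2] by simp
  then have "ennreal ((inner_L2 \<mu> f g)\<^sup>2) \<le> ennreal ((\<integral>x. \<bar>f x * g x\<bar> \<partial>\<mu>)\<^sup>2)"
    by (rule ennreal_leI)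
  also have "\<dots> = (\<integral>\<^sup>+x. ennreal \<bar>f x\<bar> * ennreal \<bar>g x\<bar> \<partial>\<mu>)\<^sup>2"
    unfolding prod by (rule ennreal_power[symmetric]) simp
  also have "\<dots> \<le> (\<integral>\<^sup>+x. ennreal \<bar>f x\<bar> ^ 2 \<partial>\<mu>) * (\<integral>\<^sup>+x. ennreal \<bar>g x\<bar> ^ 2 \<partial>\<mu>)"
    by (rule Cauchy_Schwarz_nn_integral) measurable
  also have "\<dots> = ennreal (sqnorm_L2 \<mu> f * sqnorm_L2 \<mu> g)"
    unfolding sq[OF assms(1)] sq[OF assms(2)]
    by (rule ennreal_mult[symmetric]) (simp_all add: sqnorm_L2_nonneg)
  finally show ?thesis
    by (rule iffD1[OF ennreal_le_iff[OF mult_nonneg_nonneg[OF sqnorm_L2_nonneg sqnorm_L2_nonneg]]])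
qed

lemma tendsto_inner_L2:
  assumes g: "L2mem \<mu> g" and h: "L2mem \<mu> h" and s: "eventually (\<lambda>n. L2mem \<mu> (s n)) F"
    and lim: "((\<lambda>n. sqnorm_L2 \<mu> (\<lambda>x. g x - s n x)) \<longlongrightarrow> 0) F"
  shows "((\<lambda>n. inner_L2 \<mu> (s n) h) \<longlongrightarrow> inner_L2 \<mu> g h) F"
proof -
  have "eventually (\<lambda>n. norm (inner_L2 \<mu> (s n) h - inner_L2 \<mu> g h)
      \<le> sqrt (sqnorm_L2 \<mu> (\<lambda>x. g x - s n x) * sqnorm_L2 \<mu> h)) F"
    using s
  proof eventually_elim
    case (elim n)
    have "(inner_L2 \<mu> (s n) h - inner_L2 \<mu> g h)\<^sup>2 = (inner_L2 \<mu> (\<lambda>x. g x - s n x) h)\<^sup>2"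
      using inner_L2_diff_left[OF g elim h] by (simp add: power2_commute)
    also have "\<dots> \<le> sqnorm_L2 \<mu> (\<lambda>x. g x - s n x) * sqnorm_L2 \<mu> h"
      by (rule inner_L2_Cauchy_Schwarz[OF L2mem_diff[OF g elim] h])
    finally show ?case
      using real_le_rsqrt[of "\<bar>inner_L2 \<mu> (s n) h - inner_L2 \<mu> g h\<bar>"] by simp
  qed
  moreover have "((\<lambda>n. sqrt (sqnorm_L2 \<mu> (\<lambda>x. g x - s n x) * sqnorm_L2 \<mu> h)) \<longlongrightarrow> 0) F"
    using tendsto_real_sqrt[OF tendsto_mult[OF lim tendsto_const]] by simp
  ultimately have "((\<lambda>n. inner_L2 \<mu> (s n) h - inner_L2 \<mu> g h) \<longlongrightarrow> 0) F"
    by (rule Lim_null_comparison)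
  then show ?thesis
    by (rule LIM_zero_cancel)
qed

section \<open>Completeness of \<open>L\<^sub>2\<close>\<close>

lemma L2mem_if_nn_integral_square_le:
  assumes [measurable]: "f \<in> borel_measurable \<mu>"
    and le: "(\<integral>\<^sup>+x. ennreal ((f x)\<^sup>2) \<partial>\<mu>) \<le> ennreal c" and "0 \<le> c"
  shows "L2mem \<mu> f" "sqnorm_L2 \<mu> f \<le> c"
proof -
  have int: "integrable \<mu> (\<lambda>x. (f x)\<^sup>2)"
  proof (rule integrableI_bounded)
    have "(\<integral>\<^sup>+x. ennreal ((f x)\<^sup>2) \<partial>\<mu>) < \<infinity>"
      using le_less_trans[OF le ennreal_less_top] by (simp add: infinity_ennreal_def)
    then show "(\<integral>\<^sup>+x. ennreal (norm ((f x)\<^sup>2)) \<partial>\<mu>) < \<infinity>"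
      by simp
  qed measurable
  then show "L2mem \<mu> f"
    by (simp add: L2mem_def)
  have "ennreal (\<integral>x. (f x)\<^sup>2 \<partial>\<mu>) \<le> ennreal c"
    using le by (simp add: nn_integral_eq_integral[OF int])
  then show "sqnorm_L2 \<mu> f \<le> c"
    using \<open>0 \<le> c\<close> by (simp add: inner_L2_def power2_eq_square)
qed

lemma sqnorm_L2_AE_limit_le:
  assumes u: "\<And>i. L2mem \<mu> (u i)" and h: "L2mem \<mu> h" and [measurable]: "g \<in> borel_measurable \<mu>"
    and lim: "AE x in \<mu>. (\<lambda>i. u i x) \<longlonglongrightarrow> g x"
    and bound: "eventually (\<lambda>i. sqnorm_L2 \<mu> (\<lambda>x. u i x - h x) \<le> c) sequentially"
  shows "L2mem \<mu> (\<lambda>x. g x - h x)" "sqnorm_L2 \<mu> (\<lambda>x. g x - h x) \<le> c"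
proof -
  have [measurable]: "u i \<in> borel_measurable \<mu>" "h \<in> borel_measurable \<mu>" for i
    using u h by (simp_all add: L2mem_def)
  obtain i where "sqnorm_L2 \<mu> (\<lambda>x. u i x - h x) \<le> c"
    using bound by (auto simp: eventually_sequentially)
  then have "0 \<le> c"
    using sqnorm_L2_nonneg order_trans by blast
  have nn_u: "(\<integral>\<^sup>+x. ennreal ((u i x - h x)\<^sup>2) \<partial>\<mu>) = ennreal (sqnorm_L2 \<mu> (\<lambda>x. u i x - h x))" for i
  proof -
    have "integrable \<mu> (\<lambda>x. (u i x - h x)\<^sup>2)"
      using L2mem_diff[OF u h] by (simp add: L2mem_def)
    then show ?thesis
      by (subst nn_integral_eq_integral) (auto simp: inner_L2_def power2_eq_square)
  qed
  have "AE x in \<mu>. ennreal ((g x - h x)\<^sup>2) = liminf (\<lambda>i. ennreal ((u i x - h x)\<^sup>2))"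
    using lim
  proof eventually_elim
    case (elim x)
    have "(\<lambda>i. ennreal ((u i x - h x)\<^sup>2)) \<longlonglongrightarrow> ennreal ((g x - h x)\<^sup>2)"
      by (intro tendsto_ennrealI tendsto_power tendsto_diff elim tendsto_const)
    then show ?case
      by (rule sym[OF lim_imp_Liminf[OF trivial_limit_sequentially]])
  qed
  then have "(\<integral>\<^sup>+x. ennreal ((g x - h x)\<^sup>2) \<partial>\<mu>) = (\<integral>\<^sup>+x. liminf (\<lambda>i. ennreal ((u i x - h x)\<^sup>2)) \<partial>\<mu>)"
    by (rule nn_integral_cong_AE)
  also have "\<dots> \<le> liminf (\<lambda>i. \<integral>\<^sup>+x. ennreal ((u i x - h x)\<^sup>2) \<partial>\<mu>)"
    by (rule nn_integral_liminf) measurable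
  also have "\<dots> \<le> ennreal c"
  proof (rule Liminf_le)
    show "eventually (\<lambda>i. (\<integral>\<^sup>+x. ennreal ((u i x - h x)\<^sup>2) \<partial>\<mu>) \<le> ennreal c) sequentially"
      using bound by eventually_elim (simp add: nn_u ennreal_leI)
  qed simp
  finally have nn_g: "(\<integral>\<^sup>+x. ennreal ((g x - h x)\<^sup>2) \<partial>\<mu>) \<le> ennreal c" .
  have "(\<lambda>x. g x - h x) \<in> borel_measurable \<mu>"
    by measurable
  then show "L2mem \<mu> (\<lambda>x. g x - h x)" "sqnorm_L2 \<mu> (\<lambda>x. g x - h x) \<le> c"
    by (rule L2mem_if_nn_integral_square_le[OF _ nn_g \<open>0 \<le> c\<close>])+
qed

lemma square_integral_abs_le_sqnorm_L2:
  assumes "finite_measure \<mu>" "L2mem \<mu> f"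
  shows "(\<integral>x. \<bar>f x\<bar> \<partial>\<mu>)\<^sup>2 \<le> sqnorm_L2 \<mu> f * measure \<mu> (space \<mu>)"
proof -
  interpret finite_measure \<mu> by fact
  have "L2mem \<mu> (\<lambda>x. \<bar>f x\<bar>)" "L2mem \<mu> (\<lambda>x. 1)"
    using assms(2) by (auto simp: L2mem_def)
  from inner_L2_Cauchy_Schwarz[OF this] show ?thesis
    by (simp add: inner_L2_def)
qed

lemma L1_Cauchy_if_L2_Cauchy:
  fixes s :: "nat \<Rightarrow> 'a \<Rightarrow> real"
  assumes "finite_measure \<mu>" and s: "\<And>n. L2mem \<mu> (s n)"
    and Cauchy_L2: "\<And>e. 0 < e \<Longrightarrow> \<exists>N. \<forall>m\<ge>N. \<forall>n\<ge>N. sqnorm_L2 \<mu> (\<lambda>x. s m x - s n x) < e"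
    and "0 < e"
  shows "\<exists>N. \<forall>i\<ge>N. \<forall>j\<ge>N. (\<integral>x. norm (s i x - s j x) \<partial>\<mu>) < e"
proof -
  define m where "m = measure \<mu> (space \<mu>)"
  have pos: "0 < m + 1"
    unfolding m_def using measure_nonneg[of \<mu> "space \<mu>"] by linarith
  then have "0 < e\<^sup>2 / (m + 1)"
    using \<open>0 < e\<close> by simp
  from Cauchy_L2[OF this] obtain N
    where N: "\<forall>i\<ge>N. \<forall>j\<ge>N. sqnorm_L2 \<mu> (\<lambda>x. s i x - s j x) < e\<^sup>2 / (m + 1)"
    by (elim exE)
  have "(\<integral>x. norm (s i x - s j x) \<partial>\<mu>) < e" if "i \<ge> N" "j \<ge> N" for i j
  proof -
    have "(\<integral>x. \<bar>s i x - s j x\<bar> \<partial>\<mu>)\<^sup>2 \<le> sqnorm_L2 \<mu> (\<lambda>x. s i x - s j x) * m"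
      unfolding m_def by (rule square_integral_abs_le_sqnorm_L2[OF assms(1) L2mem_diff[OF s s]])
    also have "\<dots> \<le> e\<^sup>2 / (m + 1) * m"
      by (intro mult_right_mono less_imp_le[OF N[rule_format, OF that]]) (simp add: m_def)
    also have "\<dots> < e\<^sup>2 / (m + 1) * (m + 1)"
      using pos \<open>0 < e\<close> by (intro mult_strict_left_mono) auto
    also have "\<dots> = e\<^sup>2"
      using pos by simp
    finally show ?thesis
      using power_less_imp_less_base[of "\<integral>x. \<bar>s i x - s j x\<bar> \<partial>\<mu>" 2 e] \<open>0 < e\<close> by simp
  qed
  then show ?thesis
    by (intro exI[of _ N] allI impI)
qed

lemma L2_Cauchy_AE_convergent_subseq:
  fixes s :: "nat \<Rightarrow> 'a \<Rightarrow> real"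
  assumes "finite_measure \<mu>" and s: "\<And>n. L2mem \<mu> (s n)"
    and Cauchy_L2: "\<And>e. 0 < e \<Longrightarrow> \<exists>N. \<forall>m\<ge>N. \<forall>n\<ge>N. sqnorm_L2 \<mu> (\<lambda>x. s m x - s n x) < e"
  obtains r g where "strict_mono r" "g \<in> borel_measurable \<mu>" "AE x in \<mu>. (\<lambda>i. s (r i) x) \<longlonglongrightarrow> g x"
proof -
  interpret finite_measure \<mu> by fact
  have [measurable]: "s n \<in> borel_measurable \<mu>" for n
    using s by (simp add: L2mem_def)
  have L1_Cauchy: "\<exists>N. \<forall>i\<ge>N. \<forall>j\<ge>N. (\<integral>x. norm (s i x - s j x) \<partial>\<mu>) < e" if "0 < e" for e
    by (rule L1_Cauchy_if_L2_Cauchy[OF assms(1) s _ that]) (erule Cauchy_L2)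
  have "integrable \<mu> (s n)" for n
    using s[of n] unfolding L2mem_def by (blast intro: square_integrable_imp_integrable)
  then obtain r where r: "strict_mono r" and AE_Cauchy: "AE x in \<mu>. Cauchy (\<lambda>i. s (r i) x)"
    using L1_Cauchy by (rule cauchy_L1_AE_cauchy_subseq)
  define g where "g x = lim (\<lambda>i. s (r i) x)" for x
  have "g \<in> borel_measurable \<mu>"
    unfolding g_def by measurable
  moreover have "AE x in \<mu>. (\<lambda>i. s (r i) x) \<longlonglongrightarrow> g x"
    using AE_Cauchy by eventually_elim (simp add: g_def Cauchy_convergent_iff convergent_LIMSEQ_iff)
  ultimately show ?thesis
    by (rule that[OF r])
qed

lemma L2_Cauchy_convergent:
  fixes s :: "nat \<Rightarrow> 'a \<Rightarrow> real"
  assumes "finite_measure \<mu>" and s: "\<And>n. L2mem \<mu> (s n)"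
    and Cauchy_L2: "\<And>e. 0 < e \<Longrightarrow> \<exists>N. \<forall>m\<ge>N. \<forall>n\<ge>N. sqnorm_L2 \<mu> (\<lambda>x. s m x - s n x) < e"
  obtains g where "L2mem \<mu> g" "(\<lambda>n. sqnorm_L2 \<mu> (\<lambda>x. g x - s n x)) \<longlonglongrightarrow> 0"
proof -
  obtain r g where r: "strict_mono r" and g: "g \<in> borel_measurable \<mu>"
    and lim: "AE x in \<mu>. (\<lambda>i. s (r i) x) \<longlonglongrightarrow> g x"
    using Cauchy_L2 by (rule L2_Cauchy_AE_convergent_subseq[OF assms(1) s])
  have close: "eventually (\<lambda>n. L2mem \<mu> (\<lambda>x. g x - s n x) \<and> sqnorm_L2 \<mu> (\<lambda>x. g x - s n x) \<le> e)
      sequentially" if "0 < e" for e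
  proof -
    from Cauchy_L2[OF \<open>0 < e\<close>] obtain N
      where N: "\<forall>m\<ge>N. \<forall>n\<ge>N. sqnorm_L2 \<mu> (\<lambda>x. s m x - s n x) < e"
      by (elim exE)
    have "L2mem \<mu> (\<lambda>x. g x - s n x) \<and> sqnorm_L2 \<mu> (\<lambda>x. g x - s n x) \<le> e" if "n \<ge> N" for n
    proof -
      have "eventually (\<lambda>i. sqnorm_L2 \<mu> (\<lambda>x. s (r i) x - s n x) \<le> e) sequentially"
        using N that seq_suble[OF r]
        by (intro eventually_sequentiallyI[of N]) (meson le_trans less_imp_le)
      then show ?thesis
        using sqnorm_L2_AE_limit_le[OF s s[of n] g lim] by simp
    qed
    then show ?thesis
      by (rule eventually_sequentiallyI)
  qed
  obtain n where "L2mem \<mu> (\<lambda>x. g x - s n x)"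
    using close[of 1] by (auto simp: eventually_sequentially)
  from L2mem_add[OF this s[of n]] have "L2mem \<mu> g"
    by simp
  moreover have "(\<lambda>n. sqnorm_L2 \<mu> (\<lambda>x. g x - s n x)) \<longlonglongrightarrow> 0"
  proof (rule order_tendstoI)
    fix a :: real
    assume "0 < a"
    then have "0 < a / 2"
      by simp
    from close[OF this] show "eventually (\<lambda>n. sqnorm_L2 \<mu> (\<lambda>x. g x - s n x) < a) sequentially"
      by eventually_elim (use \<open>0 < a\<close> in auto)
  next
    fix a :: real
    assume "a < 0"
    then show "eventually (\<lambda>n. a < sqnorm_L2 \<mu> (\<lambda>x. g x - s n x)) sequentially"
      by (intro always_eventually allI less_le_trans[OF _ sqnorm_L2_nonneg])
  qed
  ultimately show ?thesis
    by (rule that)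
qed

section \<open>Orthonormal systems and Parseval's identity\<close>

definition orthonormal_L2 :: "'a measure \<Rightarrow> ('i \<Rightarrow> 'a \<Rightarrow> real) \<Rightarrow> bool" where
  "orthonormal_L2 \<mu> e \<longleftrightarrow>
     (\<forall>k. L2mem \<mu> (e k)) \<and> (\<forall>k l. inner_L2 \<mu> (e k) (e l) = (if k = l then 1 else 0))"

lemma ONB_L2_orthonormal: "ONB_L2 \<mu> e \<Longrightarrow> orthonormal_L2 \<mu> e"
  by (simp add: ONB_L2_def orthonormal_L2_def)

lemma orthonormal_L2D:
  assumes "orthonormal_L2 \<mu> e"
  shows "L2mem \<mu> (e k)" "inner_L2 \<mu> (e k) (e l) = (if k = l then 1 else 0)"
  using assms by (simp_all add: orthonormal_L2_def)

lemma orthonormal_L2_compose: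
  assumes T: "T \<in> measurable M N" and e: "orthonormal_L2 (distr M N T) e"
  shows "orthonormal_L2 M (\<lambda>k x. e k (T x))"
proof -
  have eN: "L2mem (distr M N T) (e k)" for k
    using e by (simp add: orthonormal_L2_def)
  have "inner_L2 M (\<lambda>x. e k (T x)) (\<lambda>x. e l (T x)) = inner_L2 (distr M N T) (e k) (e l)" for k l
    by (rule inner_L2_distr[OF T L2mem_distr_measurable[OF eN] L2mem_distr_measurable[OF eN], symmetric])
  with e show ?thesis
    using L2mem_compose[OF T eN] by (simp add: orthonormal_L2_def)
qed

lemma inner_L2_orthonormal_sum:
  assumes e: "orthonormal_L2 \<mu> e" and "finite A"
  shows "inner_L2 \<mu> (\<lambda>x. \<Sum>k\<in>A. c k * e k x) (e l) = (if l \<in> A then c l else 0)"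
proof -
  have "inner_L2 \<mu> (\<lambda>x. \<Sum>k\<in>A. c k * e k x) (e l) = (\<Sum>k\<in>A. c k * inner_L2 \<mu> (e k) (e l))"
    using assms by (intro inner_L2_sum_left) (simp_all add: orthonormal_L2D)
  also have "\<dots> = (\<Sum>k\<in>A. if k = l then c k else 0)"
    by (intro sum.cong) (simp_all add: orthonormal_L2D[OF e])
  finally show ?thesis
    using \<open>finite A\<close> by simp
qed

lemma sqnorm_L2_orthonormal_sum:
  assumes e: "orthonormal_L2 \<mu> e" and "finite A"
  shows "sqnorm_L2 \<mu> (\<lambda>x. \<Sum>k\<in>A. c k * e k x) = (\<Sum>k\<in>A. (c k)\<^sup>2)"
proof -
  have "L2mem \<mu> (\<lambda>x. \<Sum>k\<in>A. c k * e k x)"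
    using assms by (intro L2mem_sum) (simp_all add: orthonormal_L2D)
  then have "sqnorm_L2 \<mu> (\<lambda>x. \<Sum>k\<in>A. c k * e k x)
      = (\<Sum>k\<in>A. c k * inner_L2 \<mu> (\<lambda>x. \<Sum>k\<in>A. c k * e k x) (e k))"
    using assms by (intro inner_L2_sum_right) (simp_all add: orthonormal_L2D)
  also have "\<dots> = (\<Sum>k\<in>A. (c k)\<^sup>2)"
    by (intro sum.cong refl) (simp add: inner_L2_orthonormal_sum[OF assms] power2_eq_square)
  finally show ?thesis .
qed

lemma sqnorm_L2_diff_Fourier_sum:
  assumes e: "orthonormal_L2 \<mu> e" and A: "finite A" and f: "L2mem \<mu> f"
  shows "sqnorm_L2 \<mu> (\<lambda>x. f x - (\<Sum>k\<in>A. inner_L2 \<mu> (e k) f * e k x))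
       = sqnorm_L2 \<mu> f - (\<Sum>k\<in>A. (inner_L2 \<mu> (e k) f)\<^sup>2)"
proof -
  have P: "L2mem \<mu> (\<lambda>x. \<Sum>k\<in>A. inner_L2 \<mu> (e k) f * e k x)"
    using assms by (intro L2mem_sum) (simp_all add: orthonormal_L2D)
  have "inner_L2 \<mu> f (\<lambda>x. \<Sum>k\<in>A. inner_L2 \<mu> (e k) f * e k x)
      = inner_L2 \<mu> (\<lambda>x. \<Sum>k\<in>A. inner_L2 \<mu> (e k) f * e k x) f"
    by (rule inner_L2_commute)
  also have "\<dots> = (\<Sum>k\<in>A. inner_L2 \<mu> (e k) f * inner_L2 \<mu> (e k) f)"
    using assms by (intro inner_L2_sum_left) (simp_all add: orthonormal_L2D)
  finally show ?thesis
    using sqnorm_L2_diff[OF f P] sqnorm_L2_orthonormal_sum[OF e A] by (simp add: power2_eq_square)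
qed

lemma Bessel_inequality_L2:
  assumes "orthonormal_L2 \<mu> e" "finite A" "L2mem \<mu> f"
  shows "(\<Sum>k\<in>A. (inner_L2 \<mu> (e k) f)\<^sup>2) \<le> sqnorm_L2 \<mu> f"
  using sqnorm_L2_diff_Fourier_sum[OF assms]
    sqnorm_L2_nonneg[of \<mu> "\<lambda>x. f x - (\<Sum>k\<in>A. inner_L2 \<mu> (e k) f * e k x)"]
  by linarith

lemma has_sum_incseq_finite_subsets:
  fixes f :: "'a \<Rightarrow> 'b::{comm_monoid_add, metric_space}"
  assumes "(f has_sum s) A"
  obtains B where "incseq B" "\<And>n. finite (B n)" "\<And>n. B n \<subseteq> A" "(\<lambda>n. sum f (B n)) \<longlonglongrightarrow> s"
proof -
  have "eventually (\<lambda>Y. dist (sum f Y) s < inverse (real (Suc n))) (finite_subsets_at_top A)" for n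
    using assms unfolding has_sum_def by (rule tendstoD) simp
  then have ex: "\<exists>X. finite X \<and> X \<subseteq> A \<and>
      (\<forall>Y. finite Y \<and> X \<subseteq> Y \<and> Y \<subseteq> A \<longrightarrow> dist (sum f Y) s < inverse (real (Suc n)))" for n
    unfolding eventually_finite_subsets_at_top .
  define X where "X n = (SOME X. finite X \<and> X \<subseteq> A \<and>
      (\<forall>Y. finite Y \<and> X \<subseteq> Y \<and> Y \<subseteq> A \<longrightarrow> dist (sum f Y) s < inverse (real (Suc n))))" for n
  have X: "finite (X n) \<and> X n \<subseteq> A \<and>
      (\<forall>Y. finite Y \<and> X n \<subseteq> Y \<and> Y \<subseteq> A \<longrightarrow> dist (sum f Y) s < inverse (real (Suc n)))" for n
    unfolding X_def by (rule someI_ex[OF ex])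
  have X_fin: "finite (X n)" and X_sub: "X n \<subseteq> A"
    and X_close: "\<And>Y. finite Y \<Longrightarrow> X n \<subseteq> Y \<Longrightarrow> Y \<subseteq> A \<Longrightarrow> dist (sum f Y) s < inverse (real (Suc n))"
    for n
    using X by blast+
  define B where "B n = (\<Union>i\<le>n. X i)" for n
  have B: "finite (B n)" "B n \<subseteq> A" for n
    unfolding B_def using X_fin X_sub by auto
  have close: "dist (sum f (B n)) s < inverse (real (Suc n))" for n
    by (rule X_close[OF B(1) _ B(2)]) (auto simp: B_def)
  have incB: "incseq B"
    unfolding incseq_def B_def by (intro allI impI UN_mono) auto
  have limB: "(\<lambda>n. sum f (B n)) \<longlonglongrightarrow> s"
  proof (rule metric_LIMSEQ_I)
    fix r :: real
    assume "0 < r"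
    then obtain N where N: "inverse (real (Suc N)) < r"
      using reals_Archimedean by blast
    have "dist (sum f (B n)) s < r" if "N \<le> n" for n
    proof -
      have "inverse (real (Suc n)) \<le> inverse (real (Suc N))"
        using that by (intro le_imp_inverse_le) auto
      then show ?thesis
        using N close[of n] by linarith
    qed
    then show "\<exists>N. \<forall>n\<ge>N. dist (sum f (B n)) s < r"
      by blast
  qed
  show ?thesis
    by (rule that[OF incB B limB])
qed

lemma has_sum_nonneg_eq_0_outside:
  fixes f :: "'a \<Rightarrow> real"
  assumes f: "(f has_sum s) UNIV" and nonneg: "\<And>k. 0 \<le> f k" and B: "\<And>n. finite (B n)"
    and lim: "(\<lambda>n. sum f (B n)) \<longlonglongrightarrow> s" and l: "l \<notin> (\<Union>n. B n)"
  shows "f l = 0"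
proof -
  have "f l \<le> s - sum f (B n)" for n
  proof -
    have "sum f (insert l (B n)) \<le> s"
      using B nonneg by (intro finite_sum_le_has_sum[OF f]) auto
    then show ?thesis
      using B l by simp
  qed
  moreover have "(\<lambda>n. s - sum f (B n)) \<longlonglongrightarrow> 0"
    using tendsto_diff[OF tendsto_const[of s] lim] by simp
  ultimately have "f l \<le> 0"
    by (intro LIMSEQ_le_const) auto
  then show ?thesis
    using nonneg[of l] by linarith
qed

lemma has_sum_sum:
  fixes f :: "'i \<Rightarrow> 'a \<Rightarrow> 'b::topological_comm_monoid_add"
  assumes "finite I" "\<And>i. i \<in> I \<Longrightarrow> (f i has_sum s i) A"
  shows "((\<lambda>x. \<Sum>i\<in>I. f i x) has_sum (\<Sum>i\<in>I. s i)) A"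
  using assms by (induction I rule: finite_induct) (auto intro: has_sum_add)

lemma inner_L2_limit_orthonormal_sums:
  assumes e: "orthonormal_L2 \<mu> e" and B: "incseq B" "\<And>n. finite (B n)" and g: "L2mem \<mu> g"
    and lim: "(\<lambda>n. sqnorm_L2 \<mu> (\<lambda>x. g x - (\<Sum>k\<in>B n. c k * e k x))) \<longlonglongrightarrow> 0"
  shows "inner_L2 \<mu> g (e l) = (if l \<in> (\<Union>n. B n) then c l else 0)"
proof -
  have "(\<lambda>n. inner_L2 \<mu> (\<lambda>x. \<Sum>k\<in>B n. c k * e k x) (e l)) \<longlonglongrightarrow> inner_L2 \<mu> g (e l)"
    using e B(2)
    by (intro tendsto_inner_L2[OF g orthonormal_L2D(1)[OF e] _ lim] always_eventually allI L2mem_sum)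
      (simp_all add: orthonormal_L2D)
  moreover have "(\<lambda>n. inner_L2 \<mu> (\<lambda>x. \<Sum>k\<in>B n. c k * e k x) (e l))
      \<longlonglongrightarrow> (if l \<in> (\<Union>n. B n) then c l else 0)"
  proof (cases "l \<in> (\<Union>n. B n)")
    case True
    then obtain n0 where "l \<in> B n0"
      by blast
    then have "l \<in> B n" if "n \<ge> n0" for n
      using incseqD[OF B(1) that] by blast
    then have "eventually (\<lambda>n. inner_L2 \<mu> (\<lambda>x. \<Sum>k\<in>B n. c k * e k x) (e l) = c l) sequentially"
      by (intro eventually_sequentiallyI[of n0]) (simp add: inner_L2_orthonormal_sum[OF e B(2)])
    then show ?thesis
      using True by (simp add: tendsto_eventually)
  next
    case False
    then show ?thesis
      by (simp add: inner_L2_orthonormal_sum[OF e B(2)])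
  qed
  ultimately show ?thesis
    by (rule LIMSEQ_unique)
qed

lemma sqnorm_L2_diff_orthonormal_sums:
  assumes e: "orthonormal_L2 \<mu> e" and "finite B" "A \<subseteq> B"
  shows "sqnorm_L2 \<mu> (\<lambda>x. (\<Sum>k\<in>B. c k * e k x) - (\<Sum>k\<in>A. c k * e k x))
       = (\<Sum>k\<in>B. (c k)\<^sup>2) - (\<Sum>k\<in>A. (c k)\<^sup>2)"
proof -
  have "sqnorm_L2 \<mu> (\<lambda>x. (\<Sum>k\<in>B. c k * e k x) - (\<Sum>k\<in>A. c k * e k x))
      = sqnorm_L2 \<mu> (\<lambda>x. \<Sum>k\<in>B - A. c k * e k x)"
    using assms(2,3) by (simp add: sum.subset_diff[of A B])
  also have "\<dots> = (\<Sum>k\<in>B - A. (c k)\<^sup>2)"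
    using assms(2) by (simp add: sqnorm_L2_orthonormal_sum[OF e])
  also have "\<dots> = (\<Sum>k\<in>B. (c k)\<^sup>2) - (\<Sum>k\<in>A. (c k)\<^sup>2)"
    using assms(2,3) by (simp add: sum.subset_diff[of A B])
  finally show ?thesis .
qed

lemma orthonormal_sums_L2_convergent:
  assumes "finite_measure \<mu>" and e: "orthonormal_L2 \<mu> e" and B: "incseq B" "\<And>n. finite (B n)"
    and conv: "convergent (\<lambda>n. \<Sum>k\<in>B n. (c k)\<^sup>2)"
  obtains g where "L2mem \<mu> g" "(\<lambda>n. sqnorm_L2 \<mu> (\<lambda>x. g x - (\<Sum>k\<in>B n. c k * e k x))) \<longlonglongrightarrow> 0"
proof -
  define S where "S n x = (\<Sum>k\<in>B n. c k * e k x)" for n x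
  have S: "L2mem \<mu> (S n)" for n
    unfolding S_def using e B by (intro L2mem_sum) (simp_all add: orthonormal_L2D)
  have dist_S: "sqnorm_L2 \<mu> (\<lambda>x. S m x - S n x) = dist (\<Sum>k\<in>B m. (c k)\<^sup>2) (\<Sum>k\<in>B n. (c k)\<^sup>2)" for m n
  proof (cases "n \<le> m")
    case True
    then have "B n \<subseteq> B m"
      by (rule incseqD[OF B(1)])
    then show ?thesis
      using sum_mono2[OF B(2) \<open>B n \<subseteq> B m\<close>, of "\<lambda>k. (c k)\<^sup>2"]
      by (simp add: S_def sqnorm_L2_diff_orthonormal_sums[OF e B(2)] dist_real_def)
  next
    case False
    then have "B m \<subseteq> B n"
      by (intro incseqD[OF B(1)]) simp
    then show ?thesis
      using sum_mono2[OF B(2) \<open>B m \<subseteq> B n\<close>, of "\<lambda>k. (c k)\<^sup>2"] sqnorm_L2_diff_commute[of \<mu> "S m"]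
      by (simp add: S_def sqnorm_L2_diff_orthonormal_sums[OF e B(2)] dist_real_def)
  qed
  have "\<exists>N. \<forall>m\<ge>N. \<forall>n\<ge>N. sqnorm_L2 \<mu> (\<lambda>x. S m x - S n x) < r" if "0 < r" for r
    using metric_CauchyD[OF convergent_Cauchy[OF conv] that] by (simp add: dist_S)
  then obtain g where "L2mem \<mu> g" "(\<lambda>n. sqnorm_L2 \<mu> (\<lambda>x. g x - S n x)) \<longlonglongrightarrow> 0"
    by (rule L2_Cauchy_convergent[where s = S, OF assms(1) S])
  then show ?thesis
    using that unfolding S_def by blast
qed

lemma Riesz_Fischer_L2:
  assumes "finite_measure \<mu>" and e: "orthonormal_L2 \<mu> e"
    and c: "((\<lambda>k. (c k)\<^sup>2) has_sum s) UNIV"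
  obtains g where "L2mem \<mu> g" "\<And>l. inner_L2 \<mu> g (e l) = c l" "sqnorm_L2 \<mu> g = s"
proof -
  obtain B where B: "incseq B" "\<And>n. finite (B n)" and lim_s: "(\<lambda>n. \<Sum>k\<in>B n. (c k)\<^sup>2) \<longlonglongrightarrow> s"
    by (metis has_sum_incseq_finite_subsets[OF c])
  from lim_s have "convergent (\<lambda>n. \<Sum>k\<in>B n. (c k)\<^sup>2)"
    by (rule convergentI)
  then obtain g where g: "L2mem \<mu> g"
    and lim_g: "(\<lambda>n. sqnorm_L2 \<mu> (\<lambda>x. g x - (\<Sum>k\<in>B n. c k * e k x))) \<longlonglongrightarrow> 0"
    by (rule orthonormal_sums_L2_convergent[OF assms(1) e B])
  have coeff: "inner_L2 \<mu> g (e l) = c l" for l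
  proof -
    have "(c l)\<^sup>2 = 0" if "l \<notin> (\<Union>n. B n)"
      by (rule has_sum_nonneg_eq_0_outside[OF c _ B(2) lim_s that]) simp
    moreover have "inner_L2 \<mu> g (e l) = (if l \<in> (\<Union>n. B n) then c l else 0)"
      by (rule inner_L2_limit_orthonormal_sums[OF e B g lim_g])
    ultimately show ?thesis
      by (metis power_eq_0_iff)
  qed
  have "inner_L2 \<mu> (e k) g = c k" for k
    using coeff inner_L2_commute by metis
  then have "sqnorm_L2 \<mu> (\<lambda>x. g x - (\<Sum>k\<in>B n. c k * e k x)) = sqnorm_L2 \<mu> g - (\<Sum>k\<in>B n. (c k)\<^sup>2)" for n
    using sqnorm_L2_diff_Fourier_sum[OF e B(2) g] by simp
  then have "(\<lambda>n. \<Sum>k\<in>B n. (c k)\<^sup>2) \<longlonglongrightarrow> sqnorm_L2 \<mu> g"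
    using tendsto_diff[OF tendsto_const[of "sqnorm_L2 \<mu> g"] lim_g] by simp
  with lim_s have "sqnorm_L2 \<mu> g = s"
    using LIMSEQ_unique by blast
  then show ?thesis
    by (rule that[OF g coeff])
qed

lemma Parseval_L2:
  assumes "finite_measure \<mu>" and onb: "ONB_L2 \<mu> e" and f: "L2mem \<mu> f"
  shows "((\<lambda>k. (inner_L2 \<mu> (e k) f)\<^sup>2) has_sum sqnorm_L2 \<mu> f) UNIV"
proof -
  have e: "orthonormal_L2 \<mu> e"
    using onb by (rule ONB_L2_orthonormal)
  have "(\<lambda>k. (inner_L2 \<mu> (e k) f)\<^sup>2) summable_on UNIV"
    using Bessel_inequality_L2[OF e _ f] by (intro nonneg_bdd_above_summable_on bdd_aboveI2) auto
  then obtain s where s: "((\<lambda>k. (inner_L2 \<mu> (e k) f)\<^sup>2) has_sum s) UNIV"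
    using has_sum_infsum by blast
  then obtain g where g: "L2mem \<mu> g" "\<And>l. inner_L2 \<mu> g (e l) = inner_L2 \<mu> (e l) f" "sqnorm_L2 \<mu> g = s"
    by (rule Riesz_Fischer_L2[OF assms(1) e]) blast
  have "inner_L2 \<mu> (\<lambda>x. f x - g x) (e l) = 0" for l
    using inner_L2_diff_left[OF f g(1) orthonormal_L2D(1)[OF e]] g(2) inner_L2_commute[of \<mu> f "e l"]
    by simp
  then have "AE x in \<mu>. f x - g x = 0"
    using onb L2mem_diff[OF f g(1)] unfolding ONB_L2_def by blast
  then have "AE x in \<mu>. f x * f x = g x * g x"
    by eventually_elim simp
  then have "sqnorm_L2 \<mu> f = sqnorm_L2 \<mu> g"
    unfolding inner_L2_def by (rule integral_cong_AE[rotated 2]) (use f g(1) in \<open>auto simp: L2mem_def\<close>)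
  with s g(3) show ?thesis
    by simp
qed

lemma has_sum_inner_L2_coeffs:
  assumes e: "orthonormal_L2 \<mu> e" and f: "L2mem \<mu> f" and g: "L2mem \<mu> g"
    and Parseval: "((\<lambda>k. (inner_L2 \<mu> (e k) f)\<^sup>2) has_sum sqnorm_L2 \<mu> f) UNIV"
  shows "((\<lambda>k. inner_L2 \<mu> (e k) f * inner_L2 \<mu> (e k) g) has_sum inner_L2 \<mu> f g) UNIV"
proof -
  define P where "P A = (\<lambda>x. \<Sum>k\<in>A. inner_L2 \<mu> (e k) f * e k x)" for A
  let ?F = "finite_subsets_at_top (UNIV :: 'i set)"
  have fin: "eventually finite ?F"
    by auto
  have P: "eventually (\<lambda>A. L2mem \<mu> (P A)) ?F"
    using fin by eventually_elim (simp add: P_def L2mem_sum orthonormal_L2D[OF e])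
  have "((\<lambda>A. sqnorm_L2 \<mu> f - (\<Sum>k\<in>A. (inner_L2 \<mu> (e k) f)\<^sup>2)) \<longlongrightarrow> sqnorm_L2 \<mu> f - sqnorm_L2 \<mu> f) ?F"
    using Parseval unfolding has_sum_def by (intro tendsto_diff tendsto_const)
  moreover have "eventually (\<lambda>A. sqnorm_L2 \<mu> f - (\<Sum>k\<in>A. (inner_L2 \<mu> (e k) f)\<^sup>2)
      = sqnorm_L2 \<mu> (\<lambda>x. f x - P A x)) ?F"
    using fin by eventually_elim (simp add: P_def sqnorm_L2_diff_Fourier_sum[OF e _ f])
  ultimately have "((\<lambda>A. sqnorm_L2 \<mu> (\<lambda>x. f x - P A x)) \<longlongrightarrow> 0) ?F"
    by (simp add: Lim_transform_eventually)
  then have "((\<lambda>A. inner_L2 \<mu> (P A) g) \<longlongrightarrow> inner_L2 \<mu> f g) ?F"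
    by (rule tendsto_inner_L2[OF f g P])
  moreover have "eventually (\<lambda>A. inner_L2 \<mu> (P A) g
      = (\<Sum>k\<in>A. inner_L2 \<mu> (e k) f * inner_L2 \<mu> (e k) g)) ?F"
    using fin by eventually_elim (simp add: P_def inner_L2_sum_left orthonormal_L2D[OF e] g)
  ultimately show ?thesis
    unfolding has_sum_def by (rule Lim_transform_eventually)
qed

section \<open>The finite-rank operator \<open>T\<^sub>d\<close>\<close>

lemma inner_L2_real_cond_exp:
  assumes "sigma_finite_subalgebra M F" and g: "L2mem M g" "g \<in> borel_measurable F" and h: "L2mem M h"
  shows "integrable M (\<lambda>x. g x * real_cond_exp M F h x)"
    and "inner_L2 M g (real_cond_exp M F h) = inner_L2 M g h"
  using sigma_finite_subalgebra.real_cond_exp_intg[OF assms(1) integrable_mult_L2[OF g(1) h] g(2)] h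
  by (simp_all add: inner_L2_def L2mem_def)

lemma sigma_finite_subalgebra_vimage_algebra:
  assumes "finite_measure M" and Z: "Z \<in> measurable M N"
  shows "sigma_finite_subalgebra M (vimage_algebra (space M) Z N)"
proof -
  have "subalgebra M (vimage_algebra (space M) Z N)"
    unfolding subalgebra_def using sets_image_in_sets[OF refl Z] by auto
  with assms(1) have "finite_measure_subalgebra M (vimage_algebra (space M) Z N)"
    by (simp add: finite_measure_subalgebra_def finite_measure_subalgebra_axioms_def)
  then show ?thesis
    by (rule finite_measure_subalgebra_is_sigma_finite)
qed

lemma integral_integral_sq_sum:
  assumes I: "finite I" and f: "\<And>i. i \<in> I \<Longrightarrow> L2mem \<mu> (f i)" and g: "\<And>i. i \<in> I \<Longrightarrow> L2mem \<nu> (g i)"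
  shows "(\<integral>x. (\<integral>z. (\<Sum>i\<in>I. f i x * g i z)\<^sup>2 \<partial>\<nu>) \<partial>\<mu>)
       = (\<Sum>i\<in>I. \<Sum>j\<in>I. inner_L2 \<mu> (f i) (f j) * inner_L2 \<nu> (g i) (g j))"
proof -
  have "(\<integral>z. (\<Sum>i\<in>I. f i x * g i z)\<^sup>2 \<partial>\<nu>) = (\<Sum>i\<in>I. \<Sum>j\<in>I. inner_L2 \<nu> (g i) (g j) * (f i x * f j x))"
    for x
  proof -
    have "(\<integral>z. (\<Sum>i\<in>I. f i x * g i z)\<^sup>2 \<partial>\<nu>) = sqnorm_L2 \<nu> (\<lambda>z. \<Sum>i\<in>I. f i x * g i z)"
      by (simp add: inner_L2_def power2_eq_square)
    also have "\<dots> = (\<Sum>i\<in>I. \<Sum>j\<in>I. f i x * f j x * inner_L2 \<nu> (g i) (g j))"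
      by (rule inner_L2_sum_sum[OF I I g g])
    finally show ?thesis
      by (simp add: ac_simps)
  qed
  then have "(\<integral>x. (\<integral>z. (\<Sum>i\<in>I. f i x * g i z)\<^sup>2 \<partial>\<nu>) \<partial>\<mu>)
      = (\<integral>x. (\<Sum>i\<in>I. \<Sum>j\<in>I. inner_L2 \<nu> (g i) (g j) * (f i x * f j x)) \<partial>\<mu>)"
    by simp
  also have "\<dots> = (\<Sum>i\<in>I. \<Sum>j\<in>I. inner_L2 \<nu> (g i) (g j) * inner_L2 \<mu> (f i) (f j))"
    using f by (simp add: inner_L2_def integrable_mult_L2)
  finally show ?thesis
    by (simp add: mult.commute)
qed

locale cond_exp_feature_model =
  fixes M :: "'w measure" and MX :: "'x measure" and MZ :: "'z measure"
    and X :: "'w \<Rightarrow> 'x" and Z :: "'w \<Rightarrow> 'z"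
    and \<phi> :: "'x \<Rightarrow> real^'d" and \<psi> :: "'z \<Rightarrow> real^'d"
    and e :: "'i \<Rightarrow> 'x \<Rightarrow> real"
  assumes prob_space_M: "prob_space M"
    and X_measurable: "X \<in> measurable M MX" and Z_measurable: "Z \<in> measurable M MZ"
    and \<phi>_L2: "\<And>i. L2mem (distr M MX X) (\<lambda>x. \<phi> x $ i)"
    and \<psi>_L2: "\<And>i. L2mem (distr M MZ Z) (\<lambda>z. \<psi> z $ i)"
    and e_ONB: "ONB_L2 (distr M MX X) e"
begin

abbreviation "\<pi>X \<equiv> distr M MX X"
abbreviation "\<pi>Z \<equiv> distr M MZ Z"

lemma finite_measure_M: "finite_measure M"
  using prob_space_M by (simp add: prob_space_def)

lemma finite_measure_\<pi>X: "finite_measure \<pi>X"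
  using prob_space_def prob_space.prob_space_distr[OF prob_space_M X_measurable] by blast

lemma L2mem_\<phi>X: "L2mem M (\<lambda>\<omega>. \<phi> (X \<omega>) $ i)"
  by (rule L2mem_compose[OF X_measurable \<phi>_L2])

lemma L2mem_\<psi>Z: "L2mem M (\<lambda>\<omega>. \<psi> (Z \<omega>) $ i)"
  by (rule L2mem_compose[OF Z_measurable \<psi>_L2])

lemma orthonormal_eX: "orthonormal_L2 M (\<lambda>k \<omega>. e k (X \<omega>))"
  by (rule orthonormal_L2_compose[OF X_measurable ONB_L2_orthonormal[OF e_ONB]])

lemma inner_L2_\<pi>X:
  "L2mem \<pi>X f \<Longrightarrow> L2mem \<pi>X g \<Longrightarrow> inner_L2 \<pi>X f g = inner_L2 M (\<lambda>\<omega>. f (X \<omega>)) (\<lambda>\<omega>. g (X \<omega>))"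
  by (intro inner_L2_distr[OF X_measurable] L2mem_distr_measurable)

lemma inner_L2_\<pi>Z:
  "L2mem \<pi>Z f \<Longrightarrow> L2mem \<pi>Z g \<Longrightarrow> inner_L2 \<pi>Z f g = inner_L2 M (\<lambda>\<omega>. f (Z \<omega>)) (\<lambda>\<omega>. g (Z \<omega>))"
  by (intro inner_L2_distr[OF Z_measurable] L2mem_distr_measurable)

lemma hs_inner_Td_Td:
  "hs_inner M e (Td M X Z MX \<phi> \<psi>) (Td M X Z MX \<phi> \<psi>)
     = (\<Sum>i\<in>UNIV. \<Sum>j\<in>UNIV.
          inner_L2 \<pi>X (\<lambda>x. \<phi> x $ i) (\<lambda>x. \<phi> x $ j) * inner_L2 \<pi>Z (\<lambda>z. \<psi> z $ i) (\<lambda>z. \<psi> z $ j))"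
proof -
  let ?a = "\<lambda>k i. inner_L2 \<pi>X (e k) (\<lambda>x. \<phi> x $ i)"
  have "inner_L2 M (Td M X Z MX \<phi> \<psi> (e k)) (Td M X Z MX \<phi> \<psi> (e k))
      = (\<Sum>i\<in>UNIV. \<Sum>j\<in>UNIV. ?a k i * ?a k j * inner_L2 \<pi>Z (\<lambda>z. \<psi> z $ i) (\<lambda>z. \<psi> z $ j))" for k
    unfolding Td_def by (simp add: inner_L2_sum_sum L2mem_\<psi>Z inner_L2_\<pi>Z \<psi>_L2)
  moreover have "((\<lambda>k. ?a k i * ?a k j) has_sum inner_L2 \<pi>X (\<lambda>x. \<phi> x $ i) (\<lambda>x. \<phi> x $ j)) UNIV" for i j
    using has_sum_inner_L2_coeffs[OF ONB_L2_orthonormal[OF e_ONB] \<phi>_L2 \<phi>_L2 Parseval_L2[OF finite_measure_\<pi>X e_ONB \<phi>_L2]] .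
  ultimately have "((\<lambda>k. inner_L2 M (Td M X Z MX \<phi> \<psi> (e k)) (Td M X Z MX \<phi> \<psi> (e k))) has_sum
      (\<Sum>i\<in>UNIV. \<Sum>j\<in>UNIV.
        inner_L2 \<pi>X (\<lambda>x. \<phi> x $ i) (\<lambda>x. \<phi> x $ j) * inner_L2 \<pi>Z (\<lambda>z. \<psi> z $ i) (\<lambda>z. \<psi> z $ j))) UNIV"
    by (simp only:) (intro has_sum_sum has_sum_cmult_left finite)
  then show ?thesis
    unfolding hs_inner_def by (rule infsumI)
qed

lemma inner_L2_Td_condT:
  "inner_L2 M (Td M X Z MX \<phi> \<psi> (e k)) (condT M X Z MZ (e k))
     = (\<Sum>i\<in>UNIV. inner_L2 M (\<lambda>\<omega>. e k (X \<omega>)) (\<lambda>\<omega>. \<phi> (X \<omega>) $ i)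
                  * inner_L2 M (\<lambda>\<omega>. e k (X \<omega>)) (\<lambda>\<omega>. \<psi> (Z \<omega>) $ i))"
proof -
  define F where "F = vimage_algebra (space M) Z MZ"
  have F: "sigma_finite_subalgebra M F"
    unfolding F_def by (rule sigma_finite_subalgebra_vimage_algebra[OF finite_measure_M Z_measurable])
  have "Z \<in> measurable F MZ"
    unfolding F_def by (rule measurable_vimage_algebra1) (use measurable_space[OF Z_measurable] in blast)
  then have \<psi>Z_F: "(\<lambda>\<omega>. \<psi> (Z \<omega>) $ i) \<in> borel_measurable F" for i
    using L2mem_distr_measurable[OF \<psi>_L2] by (rule measurable_compose)
  let ?eX = "\<lambda>\<omega>. e k (X \<omega>)"
  let ?C = "real_cond_exp M F ?eX"
  have eX: "L2mem M ?eX"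
    using orthonormal_L2D(1)[OF orthonormal_eX] .
  have ce_int: "integrable M (\<lambda>\<omega>. \<psi> (Z \<omega>) $ i * ?C \<omega>)" for i
    by (rule inner_L2_real_cond_exp(1)[OF F L2mem_\<psi>Z \<psi>Z_F eX])
  have ce_inner: "inner_L2 M (\<lambda>\<omega>. \<psi> (Z \<omega>) $ i) ?C = inner_L2 M ?eX (\<lambda>\<omega>. \<psi> (Z \<omega>) $ i)" for i
    using inner_L2_real_cond_exp(2)[OF F L2mem_\<psi>Z \<psi>Z_F eX]
      inner_L2_commute[of M ?eX "\<lambda>\<omega>. \<psi> (Z \<omega>) $ i"]
    by simp
  have "inner_L2 M (Td M X Z MX \<phi> \<psi> (e k)) ?C
      = (\<integral>\<omega>. (\<Sum>i\<in>UNIV. inner_L2 \<pi>X (e k) (\<lambda>x. \<phi> x $ i) * (\<psi> (Z \<omega>) $ i * ?C \<omega>)) \<partial>M)"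
    unfolding Td_def inner_L2_def by (simp add: sum_distrib_right mult.assoc)
  also have "\<dots> = (\<Sum>i\<in>UNIV. inner_L2 \<pi>X (e k) (\<lambda>x. \<phi> x $ i) * inner_L2 M (\<lambda>\<omega>. \<psi> (Z \<omega>) $ i) ?C)"
    by (subst Bochner_Integration.integral_sum) (simp_all add: inner_L2_def ce_int)
  also have "\<dots> = (\<Sum>i\<in>UNIV. inner_L2 M ?eX (\<lambda>\<omega>. \<phi> (X \<omega>) $ i) * inner_L2 M ?eX (\<lambda>\<omega>. \<psi> (Z \<omega>) $ i))"
    using ONB_L2_orthonormal[OF e_ONB] by (simp add: ce_inner inner_L2_\<pi>X \<phi>_L2 orthonormal_L2D)
  finally show ?thesis
    unfolding condT_def F_def .
qed

lemma hs_inner_Td_condT: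
  "hs_inner M e (Td M X Z MX \<phi> \<psi>) (condT M X Z MZ)
     = (\<Sum>i\<in>UNIV. inner_L2 M (\<lambda>\<omega>. \<phi> (X \<omega>) $ i) (\<lambda>\<omega>. \<psi> (Z \<omega>) $ i))"
proof -
  let ?a = "\<lambda>k i. inner_L2 M (\<lambda>\<omega>. e k (X \<omega>)) (\<lambda>\<omega>. \<phi> (X \<omega>) $ i)"
  let ?b = "\<lambda>k i. inner_L2 M (\<lambda>\<omega>. e k (X \<omega>)) (\<lambda>\<omega>. \<psi> (Z \<omega>) $ i)"
  have "((\<lambda>k. ?a k i * ?b k i) has_sum inner_L2 M (\<lambda>\<omega>. \<phi> (X \<omega>) $ i) (\<lambda>\<omega>. \<psi> (Z \<omega>) $ i)) UNIV" for i
  proof (rule has_sum_inner_L2_coeffs[OF orthonormal_eX L2mem_\<phi>X L2mem_\<psi>Z])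
    show "((\<lambda>k. (?a k i)\<^sup>2) has_sum sqnorm_L2 M (\<lambda>\<omega>. \<phi> (X \<omega>) $ i)) UNIV"
      using Parseval_L2[OF finite_measure_\<pi>X e_ONB \<phi>_L2] e_ONB
      by (simp add: inner_L2_\<pi>X \<phi>_L2 orthonormal_L2D ONB_L2_orthonormal)
  qed
  then have "((\<lambda>k. inner_L2 M (Td M X Z MX \<phi> \<psi> (e k)) (condT M X Z MZ (e k))) has_sum
      (\<Sum>i\<in>UNIV. inner_L2 M (\<lambda>\<omega>. \<phi> (X \<omega>) $ i) (\<lambda>\<omega>. \<psi> (Z \<omega>) $ i))) UNIV"
    unfolding inner_L2_Td_condT by (intro has_sum_sum finite)
  then show ?thesis
    unfolding hs_inner_def by (rule infsumI)
qed

end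

theorem mainTheorem3:
  fixes M :: "'w measure" and MX :: "'x measure" and MZ :: "'z measure"
    and X :: "'w \<Rightarrow> 'x" and Z :: "'w \<Rightarrow> 'z"
    and \<phi> :: "'x \<Rightarrow> real^'d" and \<psi> :: "'z \<Rightarrow> real^'d"
    and e :: "'i \<Rightarrow> 'x \<Rightarrow> real"
  assumes "prob_space M"
    and "X \<in> measurable M MX" and "Z \<in> measurable M MZ"
    and "\<forall>i. L2mem (distr M MX X) (\<lambda>x. \<phi> x $ i)"
    and "\<forall>i. L2mem (distr M MZ Z) (\<lambda>z. \<psi> z $ i)"
    and "ONB_L2 (distr M MX X) e"
  shows "hs_inner M e (Td M X Z MX \<phi> \<psi>) (Td M X Z MX \<phi> \<psi>)
           - 2 * hs_inner M e (Td M X Z MX \<phi> \<psi>) (condT M X Z MZ)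
         = (\<integral>x. (\<integral>z. (\<phi> x \<bullet> \<psi> z)\<^sup>2 \<partial>(distr M MZ Z)) \<partial>(distr M MX X))
           - 2 * (\<integral>\<omega>. \<phi> (X \<omega>) \<bullet> \<psi> (Z \<omega>) \<partial>M)"
proof -
  interpret cond_exp_feature_model M MX MZ X Z \<phi> \<psi> e
    using assms by (intro cond_exp_feature_model.intro) blast+
  have "(\<integral>x. (\<integral>z. (\<phi> x \<bullet> \<psi> z)\<^sup>2 \<partial>\<pi>Z) \<partial>\<pi>X) = hs_inner M e (Td M X Z MX \<phi> \<psi>) (Td M X Z MX \<phi> \<psi>)"
    unfolding hs_inner_Td_Td inner_vec_def inner_real_def
    by (rule integral_integral_sq_sum) (simp_all add: \<phi>_L2 \<psi>_L2)
  moreover have "(\<integral>\<omega>. \<phi> (X \<omega>) \<bullet> \<psi> (Z \<omega>) \<partial>M) = hs_inner M e (Td M X Z MX \<phi> \<psi>) (condT M X Z MZ)"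
    unfolding hs_inner_Td_condT inner_vec_def inner_real_def inner_L2_def
    by (rule Bochner_Integration.integral_sum) (intro integrable_mult_L2 L2mem_\<phi>X L2mem_\<psi>Z)
  ultimately show ?thesis
    by simp
qed

end
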